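(* Every RiFle assignment game (with arbitrary nonnegative real data $(\beta_{ij},\gamma_{ij})$ and an arbitrary assignment of each agent as rigid or flexible) has at least one stable outcome; i.e. the set of stable outcomes is nonempty.
   Context: A RiFle assignment game consists of two disjoint sets of agents $P=\{p_1,\dots,p_n\}$ and $Q=\{q_1,\dots,q_n\}$, a pair of nonnegative real numbers $(\beta_{ij},\gamma_{ij})$ for every pair $(p_i,q_j)\in P\times Q$ (write $\alpha_{ij}=\beta_{ij}+\gamma_{ij}$), and a designation of every agent as either rigid or flexible. Let $\mathcal R$ be the set of pairs $(p_i,q_j)$ in which at least one of $p_i,q_j$ is rigid, and $\mathcal F$ the set of pairs in which both are flexible. An outcome $(\bar u,\bar v;\mu)$ consists of a matching $\mu$ between $P$ and $Q$ (a set of disjoint pairs $(p_i,q_j)$; write $p_i\stackrel{\mu}{\longleftrightarrow} q_j$) and payoff vectors $\bar u=(u_1,\dots,u_n)$, $\bar v=(v_1,\dots,v_n)\in\mathbb R^n$. It is feasible if: (1) $u_i\ge 0$, $v_j\ge 0$ for all $i,j$; (2) if a rigid agent $p_i$ is matched to $q_j$ then $u_i=\beta_{ij}$, and if moreover $q_j$ is flexible then $v_j\ge\gamma_{ij}$; symmetrically, if a rigid agent $q_j$ is matched to $p_i$ then $v_j=\gamma_{ij}$, and if moreover $p_i$ is flexible then $u_i\ge\beta_{ij}$; (3) $\sum_i u_i+\sum_j v_j=\sum_{p_i\stackrel{\mu}{\longleftrightarrow} q_j}\alpha_{ij}$. It is stable if it is feasible and $u_i+v_j\ge\alpha_{ij}$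 for all $(p_i,q_j)\in\mathcal F$, and ($u_i\ge\beta_{ij}$ or $v_j\ge\gamma_{ij}$) for all $(p_i,q_j)\in\mathcal R$. *)

theory Defs
  imports Complex_Main
begin

text \<open>A RiFle assignment game with n agents on each side P = {p_0..p_{n-1}},
  Q = {q_0..q_{n-1}} (indexed by {..<n}); data beta i j, gamma i j for the pair
  (p_i,q_j); rigidP i / rigidQ j designate p_i / q_j as rigid (otherwise flexible).
  Payoff vectors u, v are functions nat => real, of which only the values on
  {..<n} are relevant.\<close>

definition alpha :: "(nat \<Rightarrow> nat \<Rightarrow> real) \<Rightarrow> (nat \<Rightarrow> nat \<Rightarrow> real) \<Rightarrow> nat \<Rightarrow> nat \<Rightarrow> real" where
  "alpha beta gamma i j = beta i j + gamma i j"

definition is_matching :: "nat \<Rightarrow> (nat \<times> nat) set \<Rightarrow> bool" where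
  "is_matching n \<mu> \<longleftrightarrow> \<mu> \<subseteq> {..<n} \<times> {..<n}
     \<and> (\<forall>i j j'. (i, j) \<in> \<mu> \<longrightarrow> (i, j') \<in> \<mu> \<longrightarrow> j = j')
     \<and> (\<forall>i i' j. (i, j) \<in> \<mu> \<longrightarrow> (i', j) \<in> \<mu> \<longrightarrow> i = i')"

definition in_R :: "(nat \<Rightarrow> bool) \<Rightarrow> (nat \<Rightarrow> bool) \<Rightarrow> nat \<Rightarrow> nat \<Rightarrow> bool" where
  "in_R rigidP rigidQ i j \<longleftrightarrow> rigidP i \<or> rigidQ j"

definition in_F :: "(nat \<Rightarrow> bool) \<Rightarrow> (nat \<Rightarrow> bool) \<Rightarrow> nat \<Rightarrow> nat \<Rightarrow> bool" where
  "in_F rigidP rigidQ i j \<longleftrightarrow> \<not> rigidP i \<and> \<not> rigidQ j"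

definition feasible_outcome ::
  "nat \<Rightarrow> (nat \<Rightarrow> nat \<Rightarrow> real) \<Rightarrow> (nat \<Rightarrow> nat \<Rightarrow> real) \<Rightarrow> (nat \<Rightarrow> bool) \<Rightarrow> (nat \<Rightarrow> bool)
   \<Rightarrow> (nat \<Rightarrow> real) \<Rightarrow> (nat \<Rightarrow> real) \<Rightarrow> (nat \<times> nat) set \<Rightarrow> bool" where
  "feasible_outcome n beta gamma rigidP rigidQ u v \<mu> \<longleftrightarrow>
     is_matching n \<mu>
   \<and> (\<forall>i<n. u i \<ge> 0) \<and> (\<forall>j<n. v j \<ge> 0)
   \<and> (\<forall>(i, j) \<in> \<mu>. rigidP i \<longrightarrow> u i = beta i j \<and> (\<not> rigidQ j \<longrightarrow> v j \<ge> gamma i j))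
   \<and> (\<forall>(i, j) \<in> \<mu>. rigidQ j \<longrightarrow> v j = gamma i j \<and> (\<not> rigidP i \<longrightarrow> u i \<ge> beta i j))
   \<and> (\<Sum>i<n. u i) + (\<Sum>j<n. v j) = (\<Sum>(i, j) \<in> \<mu>. alpha beta gamma i j)"

definition stable_outcome ::
  "nat \<Rightarrow> (nat \<Rightarrow> nat \<Rightarrow> real) \<Rightarrow> (nat \<Rightarrow> nat \<Rightarrow> real) \<Rightarrow> (nat \<Rightarrow> bool) \<Rightarrow> (nat \<Rightarrow> bool)
   \<Rightarrow> (nat \<Rightarrow> real) \<Rightarrow> (nat \<Rightarrow> real) \<Rightarrow> (nat \<times> nat) set \<Rightarrow> bool" where
  "stable_outcome n beta gamma rigidP rigidQ u v \<mu> \<longleftrightarrow>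
     feasible_outcome n beta gamma rigidP rigidQ u v \<mu>
   \<and> (\<forall>i<n. \<forall>j<n. in_F rigidP rigidQ i j \<longrightarrow> u i + v j \<ge> alpha beta gamma i j)
   \<and> (\<forall>i<n. \<forall>j<n. in_R rigidP rigidQ i j \<longrightarrow> u i \<ge> beta i j \<or> v j \<ge> gamma i j)"

end

theory Submission
  imports Defs "HOL-Library.Product_Lexorder" "HOL-Library.Infinite_Set"
begin

text \<open>
  Fix a grid step \<open>e > 0\<close>. A flexible pair \<open>(p\<^sub>i, q\<^sub>j)\<close> may sign any contract splitting
  its surplus \<open>\<alpha>\<^sub>i\<^sub>j\<close> as \<open>(k e, \<alpha>\<^sub>i\<^sub>j - k e)\<close>; a pair with a rigid agent has the single
  contract \<open>(\<beta>\<^sub>i\<^sub>j, \<gamma>\<^sub>i\<^sub>j)\<close>. Ranking contracts by own share, with ties broken by the contract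
  itself, every agent has strict preferences over finitely many contracts, and the
  Hatfield--Milgrom fixed point (Tarski's theorem for a composition of two antitone maps)
  gives a set of contracts in which nobody signs twice and every other
  contract is rejected by one of its two agents. Its payoffs form a feasible outcome that is
  stable on rigid pairs and stable up to \<open>e\<close> on flexible ones.

  Feasible payoffs are bounded by the total surplus and there are finitely many matchings,
  so along \<open>e \<rightarrow> 0\<close> some subsequence has a fixed matching and convergent payoffs; all
  conditions of stability are closed, so the limit is a stable outcome.
\<close>

section \<open>Stable sets of contracts\<close>

definition chosen :: "('c \<Rightarrow> 'a) \<Rightarrow> ('c \<Rightarrow> 'k::linorder) \<Rightarrow> 'c set \<Rightarrow> 'c set" where
  "chosen agent key A = {x \<in> A. \<forall>y \<in> A. agent y = agent x \<longrightarrow> key y \<le> key x}"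

lemma chosen_subset: "chosen agent key A \<subseteq> A"
  by (auto simp: chosen_def)

definition rejected :: "('c \<Rightarrow> 'a) \<Rightarrow> ('c \<Rightarrow> 'k::linorder) \<Rightarrow> 'c set \<Rightarrow> 'c set" where
  "rejected agent key A = A - chosen agent key A"

lemma rejected_mono: "A \<subseteq> B \<Longrightarrow> rejected agent key A \<subseteq> rejected agent key B"
  by (auto simp: rejected_def chosen_def)

lemma inj_on_agent_chosen:
  assumes "inj_on key X" and "A \<subseteq> X"
  shows "inj_on agent (chosen agent key A)"
proof (rule inj_onI)
  fix x y assume "x \<in> chosen agent key A" "y \<in> chosen agent key A" "agent x = agent y"
  then have "key x = key y" and "x \<in> X" "y \<in> X"
    using \<open>A \<subseteq> X\<close> by (auto simp: chosen_def intro: order.antisym)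
  then show "x = y" using \<open>inj_on key X\<close> by (auto dest: inj_onD)
qed

lemma chosen_dominates:
  assumes "finite A" and "x \<in> A"
  obtains z where "z \<in> chosen agent key A" "agent z = agent x" "key x \<le> key z"
proof -
  let ?S = "{y \<in> A. agent y = agent x}"
  have fin: "finite (key ` ?S)" and ne: "key ` ?S \<noteq> {}"
    using assms by auto
  obtain z where z: "z \<in> ?S" "key z = Max (key ` ?S)"
    using Max_in[OF fin ne] by auto
  then have "\<forall>y \<in> ?S. key y \<le> key z"
    using fin by simp
  then have "z \<in> chosen agent key A" and "key x \<le> key z"
    using z assms(2) by (auto simp: chosen_def)
  with z show thesis
    using that by simp
qed

theorem stable_contract_set_exists:
  fixes X :: "'c set" and agentP agentQ :: "'c \<Rightarrow> 'a"
    and keyP :: "'c \<Rightarrow> 'k::linorder" and keyQ :: "'c \<Rightarrow> 'l::linorder"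
  assumes "finite X" and "inj_on keyP X" and "inj_on keyQ X"
  obtains Y where "Y \<subseteq> X" and "inj_on agentP Y" and "inj_on agentQ Y"
    and "\<And>x. x \<in> X - Y \<Longrightarrow> (\<exists>y \<in> Y. agentP y = agentP x \<and> keyP x < keyP y)
                           \<or> (\<exists>y \<in> Y. agentQ y = agentQ x \<and> keyQ x < keyQ y)"
proof -
  define F where "F A = X - rejected agentQ keyQ (X - rejected agentP keyP A)" for A
  have "mono F"
  proof (rule monoI)
    fix A B :: "'c set" assume "A \<subseteq> B"
    then have "X - rejected agentP keyP B \<subseteq> X - rejected agentP keyP A"
      using rejected_mono[of A B agentP keyP] by blast
    then show "F A \<subseteq> F B"
      unfolding F_def using rejected_mono by blast
  qed
  \<comment> \<open>\<open>XP\<close> and \<open>XQ\<close> are the contracts offered to the two sides: those not rejected by the other side.\<close>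
  define XP where "XP = lfp F"
  define XQ where "XQ = X - rejected agentP keyP XP"
  have "XP = F XP"
    unfolding XP_def by (rule lfp_unfold[OF \<open>mono F\<close>])
  then have XP: "XP = X - rejected agentQ keyQ XQ"
    by (simp add: F_def XQ_def)
  have "XP \<subseteq> X" "XQ \<subseteq> X"
    by (subst XP, blast) (auto simp: XQ_def)
  then have fin: "finite XP" "finite XQ"
    using \<open>finite X\<close> by (auto intro: finite_subset)
  define Y where "Y = XP \<inter> XQ"
  have YP: "Y = chosen agentP keyP XP"
    using \<open>XP \<subseteq> X\<close> chosen_subset[of agentP keyP XP] by (auto simp: Y_def XQ_def rejected_def)
  have YQ: "Y = chosen agentQ keyQ XQ"
    unfolding Y_def
    by (subst XP) (use \<open>XQ \<subseteq> X\<close> chosen_subset[of agentQ keyQ XQ] in \<open>auto simp: rejected_def\<close>)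
  have "Y \<subseteq> X"
    using \<open>XP \<subseteq> X\<close> by (auto simp: Y_def)
  show thesis
  proof
    show "Y \<subseteq> X" by fact
    show "inj_on agentP Y"
      unfolding YP using assms(2) \<open>XP \<subseteq> X\<close> by (rule inj_on_agent_chosen)
    show "inj_on agentQ Y"
      unfolding YQ using assms(3) \<open>XQ \<subseteq> X\<close> by (rule inj_on_agent_chosen)
  next
    fix x assume x: "x \<in> X - Y"
    show "(\<exists>y \<in> Y. agentP y = agentP x \<and> keyP x < keyP y)
          \<or> (\<exists>y \<in> Y. agentQ y = agentQ x \<and> keyQ x < keyQ y)"
    proof (cases "x \<in> XP")
      case True
      then obtain z where z: "z \<in> Y" "agentP z = agentP x" "keyP x \<le> keyP z"
        using chosen_dominates[OF fin(1)] YP by metis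
      with x have "keyP x \<noteq> keyP z"
        using \<open>Y \<subseteq> X\<close> assms(2) by (auto dest: inj_onD)
      with z show ?thesis by auto
    next
      case False
      with x XP have "x \<in> rejected agentQ keyQ XQ" by simp
      then obtain y where y: "y \<in> XQ" "agentQ y = agentQ x" "keyQ x < keyQ y"
        by (auto simp: rejected_def chosen_def not_le)
      then obtain z where "z \<in> Y" "agentQ z = agentQ x" "keyQ x < keyQ z"
        using chosen_dominates[OF fin(2) y(1)] YQ by (metis order.strict_trans2)
      then show ?thesis by auto
    qed
  qed
qed

definition agent_payoff :: "('c \<Rightarrow> 'a) \<Rightarrow> ('c \<Rightarrow> real) \<Rightarrow> 'c set \<Rightarrow> 'a \<Rightarrow> real" where
  "agent_payoff agent share Y a = sum share {x \<in> Y. agent x = a}"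

lemma agent_payoff_eq:
  assumes "inj_on agent Y" and "x \<in> Y"
  shows "agent_payoff agent share Y (agent x) = share x"
proof -
  have "{y \<in> Y. agent y = agent x} = {x}"
    using assms by (auto dest: inj_onD)
  then show ?thesis
    by (simp add: agent_payoff_def)
qed

lemma agent_payoff_nonneg: "(\<And>x. x \<in> Y \<Longrightarrow> 0 \<le> share x) \<Longrightarrow> 0 \<le> agent_payoff agent share Y a"
  unfolding agent_payoff_def by (auto intro: sum_nonneg)

lemma sum_agent_payoff:
  assumes "finite Y" and "finite A" and "agent ` Y \<subseteq> A"
  shows "(\<Sum>a\<in>A. agent_payoff agent share Y a) = sum share Y"
  unfolding agent_payoff_def by (rule sum.group[OF assms])

section \<open>Limits of approximately stable outcomes\<close>

lemma convergent_subseq_finite_family: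
  fixes s :: "nat \<Rightarrow> 'i \<Rightarrow> real"
  assumes "finite I" and "\<And>i. i \<in> I \<Longrightarrow> Bseq (\<lambda>N. s N i)"
  shows "\<exists>r. strict_mono r \<and> (\<forall>i \<in> I. convergent (\<lambda>N. s (r N) i))"
  using assms
proof (induction I rule: finite_induct)
  case empty
  show ?case
    using strict_mono_id by blast
next
  case (insert i I)
  then obtain r where r: "strict_mono r" "\<forall>i' \<in> I. convergent (\<lambda>N. s (r N) i')"
    by blast
  obtain g where g: "strict_mono g" "monoseq (\<lambda>N. s (r (g N)) i)"
    using seq_monosub[of "\<lambda>N. s (r N) i"] by blast
  have "Bseq (\<lambda>N. s (r (g N)) i)"
    using insert.prems Bseq_subseq by blast
  then have "convergent (\<lambda>N. s (r (g N)) i)"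
    using g(2) by (rule Bseq_monoseq_convergent)
  moreover have "convergent (\<lambda>N. s (r (g N)) i')" if "i' \<in> I" for i'
    using convergent_subseq_convergent[OF r(2)[rule_format, OF that] g(1)] by (simp add: o_def)
  ultimately have "\<forall>i' \<in> insert i I. convergent (\<lambda>N. s ((r \<circ> g) N) i')"
    by simp
  then show ?case
    using strict_mono_o[OF r(1) g(1)] by blast
qed

lemma constant_subseq_if_finite_range:
  fixes f :: "nat \<Rightarrow> 'a"
  assumes "finite (range f)"
  obtains r :: "nat \<Rightarrow> nat" and c where "strict_mono r" and "\<forall>N. f (r N) = c"
proof -
  obtain c where "infinite (f -` {c})"
    using inf_img_fin_domE[OF assms infinite_UNIV_nat] by blast
  then obtain r :: "nat \<Rightarrow> nat" where "strict_mono r" "\<forall>N. r N \<in> f -` {c}"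
    using infinite_enumerate by blast
  then show thesis
    using that[of r c] by simp
qed

locale rifle_game =
  fixes n :: nat and beta gamma :: "nat \<Rightarrow> nat \<Rightarrow> real" and rigidP rigidQ :: "nat \<Rightarrow> bool"
begin

abbreviation feasible :: "(nat \<Rightarrow> real) \<Rightarrow> (nat \<Rightarrow> real) \<Rightarrow> (nat \<times> nat) set \<Rightarrow> bool" where
  "feasible \<equiv> feasible_outcome n beta gamma rigidP rigidQ"

abbreviation surplus :: "nat \<Rightarrow> nat \<Rightarrow> real" where
  "surplus \<equiv> alpha beta gamma"

abbreviation flexible :: "nat \<Rightarrow> nat \<Rightarrow> bool" where
  "flexible \<equiv> in_F rigidP rigidQ"

definition eps_stable :: "real \<Rightarrow> (nat \<Rightarrow> real) \<Rightarrow> (nat \<Rightarrow> real) \<Rightarrow> (nat \<times> nat) set \<Rightarrow> bool" where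
  "eps_stable e u v \<mu> \<longleftrightarrow> feasible u v \<mu>
     \<and> (\<forall>i<n. \<forall>j<n. flexible i j \<longrightarrow> surplus i j - e \<le> u i + v j)
     \<and> (\<forall>i<n. \<forall>j<n. in_R rigidP rigidQ i j \<longrightarrow> beta i j \<le> u i \<or> gamma i j \<le> v j)"

lemma stable_outcome_iff_eps_stable_0:
  "stable_outcome n beta gamma rigidP rigidQ u v \<mu> \<longleftrightarrow> eps_stable 0 u v \<mu>"
  by (auto simp: stable_outcome_def eps_stable_def)

lemma feasible_limit:
  assumes feas: "\<And>N. feasible (U N) (V N) \<mu>"
    and U: "\<And>i. i < n \<Longrightarrow> (\<lambda>N. U N i) \<longlonglongrightarrow> u i"
    and V: "\<And>j. j < n \<Longrightarrow> (\<lambda>N. V N j) \<longlonglongrightarrow> v j"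
  shows "feasible u v \<mu>"
proof -
  have \<mu>: "is_matching n \<mu>" and \<mu>_sub: "\<mu> \<subseteq> {..<n} \<times> {..<n}"
    using feas[of 0] by (auto simp: feasible_outcome_def is_matching_def)
  have U_nonneg: "0 \<le> U N i" if "i < n" for N i
    using feas[of N] that by (auto simp: feasible_outcome_def)
  have V_nonneg: "0 \<le> V N j" if "j < n" for N j
    using feas[of N] that by (auto simp: feasible_outcome_def)
  have rigid_P: "u i = beta i j \<and> (\<not> rigidQ j \<longrightarrow> gamma i j \<le> v j)"
    if "(i, j) \<in> \<mu>" "rigidP i" for i j
  proof -
    have UV: "U N i = beta i j \<and> (\<not> rigidQ j \<longrightarrow> gamma i j \<le> V N j)" for N
      using feas[of N] that by (auto simp: feasible_outcome_def)
    have "i < n" "j < n"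
      using \<mu>_sub that(1) by auto
    then have "(\<lambda>N. beta i j) \<longlonglongrightarrow> u i" and "(\<lambda>N. V N j) \<longlonglongrightarrow> v j"
      using U[of i] V[of j] UV by simp_all
    then show ?thesis
      using UV by (auto simp: LIMSEQ_const_iff intro: LIMSEQ_le_const)
  qed
  have rigid_Q: "v j = gamma i j \<and> (\<not> rigidP i \<longrightarrow> beta i j \<le> u i)"
    if "(i, j) \<in> \<mu>" "rigidQ j" for i j
  proof -
    have UV: "V N j = gamma i j \<and> (\<not> rigidP i \<longrightarrow> beta i j \<le> U N i)" for N
      using feas[of N] that by (auto simp: feasible_outcome_def)
    have "i < n" "j < n"
      using \<mu>_sub that(1) by auto
    then have "(\<lambda>N. gamma i j) \<longlonglongrightarrow> v j" and "(\<lambda>N. U N i) \<longlonglongrightarrow> u i"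
      using U[of i] V[of j] UV by simp_all
    then show ?thesis
      using UV by (auto simp: LIMSEQ_const_iff intro: LIMSEQ_le_const)
  qed
  have "(\<lambda>N. (\<Sum>i<n. U N i) + (\<Sum>j<n. V N j)) \<longlonglongrightarrow> (\<Sum>i<n. u i) + (\<Sum>j<n. v j)"
    using U V by (intro tendsto_intros) auto
  moreover have "(\<Sum>i<n. U N i) + (\<Sum>j<n. V N j) = (\<Sum>(i, j) \<in> \<mu>. surplus i j)" for N
    using feas[of N] by (simp add: feasible_outcome_def)
  ultimately have sum_eq: "(\<Sum>i<n. u i) + (\<Sum>j<n. v j) = (\<Sum>(i, j) \<in> \<mu>. surplus i j)"
    by (simp add: LIMSEQ_const_iff)
  have "0 \<le> u i" "0 \<le> v i" if "i < n" for i
    using LIMSEQ_le_const[OF U[OF that]] LIMSEQ_le_const[OF V[OF that]]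
      U_nonneg[OF that] V_nonneg[OF that] by auto
  with \<mu> rigid_P rigid_Q sum_eq show ?thesis
    unfolding feasible_outcome_def by blast
qed

lemma eps_stable_limit:
  assumes approx: "\<And>N. eps_stable (e N) (U N) (V N) \<mu>" and e: "e \<longlonglongrightarrow> e0"
    and U: "\<And>i. i < n \<Longrightarrow> (\<lambda>N. U N i) \<longlonglongrightarrow> u i"
    and V: "\<And>j. j < n \<Longrightarrow> (\<lambda>N. V N j) \<longlonglongrightarrow> v j"
  shows "eps_stable e0 u v \<mu>"
proof -
  have "feasible (U N) (V N) \<mu>" for N
    using approx[of N] by (simp add: eps_stable_def)
  then have "feasible u v \<mu>"
    using U V by (rule feasible_limit)
  moreover have "surplus i j - e0 \<le> u i + v j" if "i < n" "j < n" "flexible i j" for i j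
  proof (rule LIMSEQ_le)
    show "(\<lambda>N. surplus i j - e N) \<longlonglongrightarrow> surplus i j - e0"
      using e by (intro tendsto_intros)
    show "(\<lambda>N. U N i + V N j) \<longlonglongrightarrow> u i + v j"
      using U V that by (intro tendsto_intros)
    show "\<exists>N0. \<forall>N\<ge>N0. surplus i j - e N \<le> U N i + V N j"
      using approx that by (auto simp: eps_stable_def)
  qed
  moreover have "beta i j \<le> u i \<or> gamma i j \<le> v j"
    if "i < n" "j < n" "in_R rigidP rigidQ i j" for i j
  proof (rule ccontr)
    assume "\<not> ?thesis"
    then have "eventually (\<lambda>N. U N i < beta i j) sequentially"
      and "eventually (\<lambda>N. V N j < gamma i j) sequentially"
      using order_tendstoD(2)[OF U[OF that(1)]] order_tendstoD(2)[OF V[OF that(2)]] by auto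
    then have "eventually (\<lambda>N. U N i < beta i j \<and> V N j < gamma i j) sequentially"
      by (rule eventually_conj)
    then obtain N where "U N i < beta i j" "V N j < gamma i j"
      by (auto simp: eventually_sequentially)
    moreover have "beta i j \<le> U N i \<or> gamma i j \<le> V N j"
      using approx[of N] that unfolding eps_stable_def by blast
    ultimately show False
      by linarith
  qed
  ultimately show ?thesis
    by (simp add: eps_stable_def)
qed

end

locale nonneg_rifle_game = rifle_game +
  assumes beta_nonneg: "\<And>i j. i < n \<Longrightarrow> j < n \<Longrightarrow> 0 \<le> beta i j"
    and gamma_nonneg: "\<And>i j. i < n \<Longrightarrow> j < n \<Longrightarrow> 0 \<le> gamma i j"
begin

lemma surplus_nonneg: "i < n \<Longrightarrow> j < n \<Longrightarrow> 0 \<le> surplus i j"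
  by (simp add: alpha_def beta_nonneg gamma_nonneg)

definition total_surplus :: real where
  "total_surplus = (\<Sum>(i, j) \<in> {..<n} \<times> {..<n}. surplus i j)"

lemma feasible_payoffs_bounded:
  assumes "feasible u v \<mu>" and "i < n"
  shows "\<bar>u i\<bar> \<le> total_surplus" and "\<bar>v i\<bar> \<le> total_surplus"
proof -
  have \<mu>: "\<mu> \<subseteq> {..<n} \<times> {..<n}" and u: "\<forall>i<n. 0 \<le> u i" and v: "\<forall>j<n. 0 \<le> v j"
    and sum_eq: "(\<Sum>i<n. u i) + (\<Sum>j<n. v j) = (\<Sum>(i, j) \<in> \<mu>. surplus i j)"
    using assms(1) by (auto simp: feasible_outcome_def is_matching_def)
  have "(\<Sum>(i, j) \<in> \<mu>. surplus i j) \<le> total_surplus"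
    unfolding total_surplus_def using \<mu> surplus_nonneg by (intro sum_mono2) auto
  moreover have "u i \<le> (\<Sum>i<n. u i)" and "v i \<le> (\<Sum>j<n. v j)"
    using u v assms(2) by (auto intro: member_le_sum)
  moreover have "0 \<le> (\<Sum>i<n. u i)" and "0 \<le> (\<Sum>j<n. v j)"
    using u v by (auto intro: sum_nonneg)
  ultimately show "\<bar>u i\<bar> \<le> total_surplus" and "\<bar>v i\<bar> \<le> total_surplus"
    using u v assms(2) sum_eq by auto
qed

lemma feasible_seq_convergent_subseq:
  assumes feas: "\<And>N. feasible (U N) (V N) (M N)"
  obtains r :: "nat \<Rightarrow> nat" and \<mu> u v where "strict_mono r" and "\<forall>N. M (r N) = \<mu>"
    and "\<forall>i<n. (\<lambda>N. U (r N) i) \<longlonglongrightarrow> u i"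
    and "\<forall>j<n. (\<lambda>N. V (r N) j) \<longlonglongrightarrow> v j"
proof -
  have "M N \<subseteq> {..<n} \<times> {..<n}" for N
    using feas[of N] by (simp add: feasible_outcome_def is_matching_def)
  then have "range M \<subseteq> Pow ({..<n} \<times> {..<n})"
    by blast
  then have "finite (range M)"
    by (rule finite_subset) simp
  then obtain r :: "nat \<Rightarrow> nat" and \<mu> where r: "strict_mono r" and M: "\<forall>N. M (r N) = \<mu>"
    by (rule constant_subseq_if_finite_range)
  define W where "W N = case_sum (U (r N)) (V (r N))" for N
  let ?I = "Inl ` {..<n} \<union> Inr ` {..<n}"
  have "Bseq (\<lambda>N. W N a)" if "a \<in> ?I" for a
    using that feasible_payoffs_bounded[OF feas]
    by (auto simp: W_def intro!: BseqI'[where K = total_surplus])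
  then obtain g where g: "strict_mono g" and conv: "\<forall>a \<in> ?I. convergent (\<lambda>N. W (g N) a)"
    using convergent_subseq_finite_family[of ?I W] by auto
  have "convergent (\<lambda>N. U (r (g N)) i)" "convergent (\<lambda>N. V (r (g N)) i)" if "i < n" for i
    using conv[rule_format, of "Inl i"] conv[rule_format, of "Inr i"] that by (simp_all add: W_def)
  then have "\<forall>i<n. (\<lambda>N. U ((r \<circ> g) N) i) \<longlonglongrightarrow> lim (\<lambda>N. U (r (g N)) i)"
    and "\<forall>j<n. (\<lambda>N. V ((r \<circ> g) N) j) \<longlonglongrightarrow> lim (\<lambda>N. V (r (g N)) j)"
    by (simp_all add: convergent_LIMSEQ_iff)
  moreover have "strict_mono (r \<circ> g)"
    using r g by (rule strict_mono_o)
  ultimately show thesis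
    using M that by simp
qed

lemma stable_exists_if_eps_stable_exists:
  assumes "\<And>e. 0 < e \<Longrightarrow> \<exists>u v \<mu>. eps_stable e u v \<mu>"
  shows "\<exists>u v \<mu>. stable_outcome n beta gamma rigidP rigidQ u v \<mu>"
proof -
  have "\<forall>N. \<exists>u v \<mu>. eps_stable (inverse (Suc N)) u v \<mu>"
    using assms by simp
  then obtain U V M where approx: "\<And>N. eps_stable (inverse (Suc N)) (U N) (V N) (M N)"
    by metis
  have feas: "feasible (U N) (V N) (M N)" for N
    using approx[of N] by (simp add: eps_stable_def)
  obtain r :: "nat \<Rightarrow> nat" and \<mu> u v where r: "strict_mono r" and M: "\<forall>N. M (r N) = \<mu>"
    and U: "\<forall>i<n. (\<lambda>N. U (r N) i) \<longlonglongrightarrow> u i"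
    and V: "\<forall>j<n. (\<lambda>N. V (r N) j) \<longlonglongrightarrow> v j"
    by (rule feasible_seq_convergent_subseq[where U = U and V = V and M = M, OF feas])
  have "eps_stable (inverse (Suc (r N))) (U (r N)) (V (r N)) \<mu>" for N
    using approx[of "r N"] M by simp
  moreover have "(\<lambda>N. inverse (real (Suc (r N)))) \<longlonglongrightarrow> 0"
    using LIMSEQ_subseq_LIMSEQ[OF LIMSEQ_inverse_real_of_nat r] by (simp add: o_def)
  ultimately have "eps_stable 0 u v \<mu>"
    by (rule eps_stable_limit) (simp_all add: U V)
  then show ?thesis
    by (auto simp: stable_outcome_iff_eps_stable_0)
qed

end

section \<open>The discretised game\<close>

lemma nat_multiple_between:
  fixes x e :: real
  assumes "0 < e" and "0 \<le> x"
  obtains k :: nat where "x < real k * e" and "real k * e \<le> x + e"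
proof
  let ?k = "nat \<lfloor>x / e\<rfloor> + 1"
  have k: "real ?k = of_int \<lfloor>x / e\<rfloor> + 1"
    using assms by simp
  have "x / e < real ?k" and "real ?k \<le> x / e + 1"
    unfolding k by linarith+
  then show "x < real ?k * e" and "real ?k * e \<le> x + e"
    using assms(1) by (simp_all add: field_simps)
qed

context nonneg_rifle_game
begin

text \<open>
  A contract \<open>(i, j, k)\<close> matches \<open>p\<^sub>i\<close> with \<open>q\<^sub>j\<close>; on a flexible pair it gives \<open>k e\<close> of the
  surplus to \<open>p\<^sub>i\<close> and the rest to \<open>q\<^sub>j\<close>, otherwise \<open>k = 0\<close> and the payoffs are \<open>\<beta>\<^sub>i\<^sub>j, \<gamma>\<^sub>i\<^sub>j\<close>.
\<close>

definition offers :: "real \<Rightarrow> nat \<Rightarrow> nat \<Rightarrow> nat set" where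
  "offers e i j = (if flexible i j then {k. real k * e \<le> surplus i j} else {0})"

definition contracts :: "real \<Rightarrow> (nat \<times> nat \<times> nat) set" where
  "contracts e = (SIGMA i:{..<n}. SIGMA j:{..<n}. offers e i j)"

definition p_share :: "real \<Rightarrow> nat \<times> nat \<times> nat \<Rightarrow> real" where
  "p_share e = (\<lambda>(i, j, k). if flexible i j then real k * e else beta i j)"

definition q_share :: "real \<Rightarrow> nat \<times> nat \<times> nat \<Rightarrow> real" where
  "q_share e = (\<lambda>(i, j, k). if flexible i j then surplus i j - real k * e else gamma i j)"

abbreviation payoff_P :: "real \<Rightarrow> (nat \<times> nat \<times> nat) set \<Rightarrow> nat \<Rightarrow> real" where
  "payoff_P e Y \<equiv> agent_payoff fst (p_share e) Y"

abbreviation payoff_Q :: "real \<Rightarrow> (nat \<times> nat \<times> nat) set \<Rightarrow> nat \<Rightarrow> real" where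
  "payoff_Q e Y \<equiv> agent_payoff (\<lambda>x. fst (snd x)) (q_share e) Y"

definition matching_of :: "(nat \<times> nat \<times> nat) set \<Rightarrow> (nat \<times> nat) set" where
  "matching_of Y = (\<lambda>x. (fst x, fst (snd x))) ` Y"

lemma finite_contracts:
  assumes "0 < e"
  shows "finite (contracts e)"
proof -
  have "k \<le> nat \<lceil>s / e\<rceil>" if "real k * e \<le> s" for k s
  proof -
    have "real k \<le> s / e"
      using that assms by (simp add: le_divide_eq)
    also have "\<dots> \<le> of_int \<lceil>s / e\<rceil>"
      by (rule le_of_int_ceiling)
    finally show ?thesis
      by linarith
  qed
  then have "{k. real k * e \<le> s} \<subseteq> {..nat \<lceil>s / e\<rceil>}" for s
    by auto
  then have "finite (offers e i j)" for i j
    by (auto simp: offers_def intro: finite_subset)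
  then show ?thesis
    by (simp add: contracts_def)
qed

lemma mem_contracts:
  "(i, j, k) \<in> contracts e \<longleftrightarrow> i < n \<and> j < n \<and> (if flexible i j then real k * e \<le> surplus i j else k = 0)"
  by (simp add: contracts_def offers_def)

lemma p_share_add_q_share: "p_share e x + q_share e x = surplus (fst x) (fst (snd x))"
  by (auto simp: p_share_def q_share_def alpha_def split: prod.splits)

lemma shares_nonneg:
  assumes "0 \<le> e" and "x \<in> contracts e"
  shows "0 \<le> p_share e x" and "0 \<le> q_share e x"
  using assms beta_nonneg gamma_nonneg
  by (auto simp: p_share_def q_share_def mem_contracts split: prod.splits if_splits)

lemma feasible_matching_of:
  assumes "0 < e" and Y: "Y \<subseteq> contracts e"
    and inj_P: "inj_on fst Y" and inj_Q: "inj_on (\<lambda>x. fst (snd x)) Y"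
  shows "feasible (payoff_P e Y) (payoff_Q e Y) (matching_of Y)"
proof -
  have fin: "finite Y"
    using finite_contracts[OF \<open>0 < e\<close>] Y by (rule finite_subset[rotated])
  have Y_sub: "fst ` Y \<subseteq> {..<n}" "(\<lambda>x. fst (snd x)) ` Y \<subseteq> {..<n}"
    using Y by (auto simp: contracts_def)
  have matching: "is_matching n (matching_of Y)"
    unfolding is_matching_def
  proof (intro conjI allI impI)
    show "matching_of Y \<subseteq> {..<n} \<times> {..<n}"
      using Y_sub by (auto simp: matching_of_def)
  next
    fix i j j' assume "(i, j) \<in> matching_of Y" "(i, j') \<in> matching_of Y"
    then show "j = j'"
      using inj_P by (auto simp: matching_of_def dest: inj_onD)
  next
    fix i i' j assume "(i, j) \<in> matching_of Y" "(i', j) \<in> matching_of Y"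
    then show "i = i'"
      using inj_Q by (auto simp: matching_of_def dest: inj_onD)
  qed
  have nonneg: "0 \<le> payoff_P e Y i" "0 \<le> payoff_Q e Y i" for i
    using shares_nonneg[OF less_imp_le[OF \<open>0 < e\<close>]] Y by (auto intro!: agent_payoff_nonneg)
  have rigid: "payoff_P e Y i = beta i j \<and> payoff_Q e Y j = gamma i j"
    if ij: "(i, j) \<in> matching_of Y" and not_flexible: "\<not> flexible i j" for i j
  proof -
    obtain k where "(i, j, k) \<in> Y"
      using ij by (auto simp: matching_of_def)
    then show ?thesis
      using agent_payoff_eq[OF inj_P, of "(i, j, k)"] agent_payoff_eq[OF inj_Q, of "(i, j, k)"]
        not_flexible by (simp add: p_share_def q_share_def)
  qed
  have sum_eq: "(\<Sum>i<n. payoff_P e Y i) + (\<Sum>j<n. payoff_Q e Y j) = (\<Sum>(i, j) \<in> matching_of Y. surplus i j)"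
  proof -
    have "inj_on (\<lambda>x. (fst x, fst (snd x))) Y"
      using inj_P by (auto simp: inj_on_def)
    then have "(\<Sum>(i, j) \<in> matching_of Y. surplus i j) = (\<Sum>x\<in>Y. surplus (fst x) (fst (snd x)))"
      by (auto simp: matching_of_def sum.reindex intro: sum.cong)
    also have "\<dots> = sum (p_share e) Y + sum (q_share e) Y"
      by (simp add: p_share_add_q_share sum.distrib[symmetric])
    finally show ?thesis
      using sum_agent_payoff[OF fin _ Y_sub(1)] sum_agent_payoff[OF fin _ Y_sub(2)] by simp
  qed
  show ?thesis
    unfolding feasible_outcome_def using matching nonneg rigid sum_eq by (auto simp: in_F_def)
qed

lemma eps_stable_if_unblocked:
  assumes "0 < e" and Y: "Y \<subseteq> contracts e"
    and inj_P: "inj_on fst Y" and inj_Q: "inj_on (\<lambda>x. fst (snd x)) Y"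
    and unblocked: "\<And>x. x \<in> contracts e \<Longrightarrow>
      p_share e x \<le> payoff_P e Y (fst x) \<or> q_share e x \<le> payoff_Q e Y (fst (snd x))"
  shows "eps_stable e (payoff_P e Y) (payoff_Q e Y) (matching_of Y)"
proof -
  let ?u = "payoff_P e Y" and ?v = "payoff_Q e Y"
  have nonneg: "0 \<le> ?u i" "0 \<le> ?v i" for i
    using shares_nonneg[OF less_imp_le[OF \<open>0 < e\<close>]] Y by (auto intro!: agent_payoff_nonneg)
  have "surplus i j - e \<le> ?u i + ?v j" if "i < n" "j < n" "flexible i j" for i j
  proof -
    \<comment> \<open>If \<open>(i, j, k)\<close> is a contract, \<open>p\<^sub>i\<close> prefers it, so \<open>q\<^sub>j\<close> does not; otherwise \<open>u\<^sub>i + e\<close> exceeds the surplus.\<close>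
    obtain k where k: "?u i < real k * e" "real k * e \<le> ?u i + e"
      using nat_multiple_between[OF \<open>0 < e\<close> nonneg(1)] .
    show ?thesis
    proof (cases "real k * e \<le> surplus i j")
      case True
      with that have "(i, j, k) \<in> contracts e"
        by (simp add: mem_contracts)
      from unblocked[OF this] that(3)
      have "real k * e \<le> ?u i \<or> surplus i j - real k * e \<le> ?v j"
        by (simp add: p_share_def q_share_def)
      with k show ?thesis
        by linarith
    next
      case False
      with k(2) nonneg(2)[of j] show ?thesis
        by linarith
    qed
  qed
  moreover have "beta i j \<le> ?u i \<or> gamma i j \<le> ?v j"
    if "i < n" "j < n" "in_R rigidP rigidQ i j" for i j
  proof -
    have "\<not> flexible i j"
      using that(3) by (simp add: in_F_def in_R_def)
    with that(1,2) have "(i, j, 0) \<in> contracts e"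
      by (simp add: mem_contracts)
    from unblocked[OF this] \<open>\<not> flexible i j\<close> show ?thesis
      by (simp add: p_share_def q_share_def)
  qed
  ultimately show ?thesis
    using feasible_matching_of[OF assms(1-4)] by (simp add: eps_stable_def)
qed

lemma eps_stable_exists:
  assumes "0 < e"
  shows "\<exists>u v \<mu>. eps_stable e u v \<mu>"
proof -
  \<comment> \<open>Lexicographic keys: own share first, ties broken by the contract, so preferences are strict.\<close>
  let ?keyP = "\<lambda>x. (p_share e x, x)" and ?keyQ = "\<lambda>x. (q_share e x, x)"
  have "inj_on ?keyP (contracts e)" and "inj_on ?keyQ (contracts e)"
    by (simp_all add: inj_on_def)
  then obtain Y where Y: "Y \<subseteq> contracts e" and inj_P: "inj_on fst Y"
    and inj_Q: "inj_on (\<lambda>x. fst (snd x)) Y"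
    and dominated: "\<And>x. x \<in> contracts e - Y \<Longrightarrow>
        (\<exists>y \<in> Y. fst y = fst x \<and> ?keyP x < ?keyP y)
      \<or> (\<exists>y \<in> Y. fst (snd y) = fst (snd x) \<and> ?keyQ x < ?keyQ y)"
    by (rule stable_contract_set_exists[OF finite_contracts[OF assms],
          where agentP = fst and agentQ = "\<lambda>x. fst (snd x)"]) blast
  have "p_share e x \<le> payoff_P e Y (fst x) \<or> q_share e x \<le> payoff_Q e Y (fst (snd x))"
    if "x \<in> contracts e" for x
  proof (cases "x \<in> Y")
    case True
    then show ?thesis
      using agent_payoff_eq[OF inj_P] by simp
  next
    case False
    from dominated[of x] that \<open>x \<notin> Y\<close> consider
        (P) y where "y \<in> Y" "fst y = fst x" "?keyP x < ?keyP y"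
      | (Q) y where "y \<in> Y" "fst (snd y) = fst (snd x)" "?keyQ x < ?keyQ y"
      by blast
    then show ?thesis
    proof cases
      case (P y)
      then have "p_share e x \<le> p_share e y"
        by auto
      with P show ?thesis
        using agent_payoff_eq[OF inj_P \<open>y \<in> Y\<close>] by simp
    next
      case (Q y)
      then have "q_share e x \<le> q_share e y"
        by auto
      with Q show ?thesis
        using agent_payoff_eq[OF inj_Q \<open>y \<in> Y\<close>] by simp
    qed
  qed
  then show ?thesis
    using eps_stable_if_unblocked[OF assms Y inj_P inj_Q] by blast
qed

end

theorem theorem1:
  fixes n :: nat
    and beta gamma :: "nat \<Rightarrow> nat \<Rightarrow> real"
    and rigidP rigidQ :: "nat \<Rightarrow> bool"
  assumes "\<forall>i<n. \<forall>j<n. beta i j \<ge> 0 \<and> gamma i j \<ge> 0"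
  shows "\<exists>u v \<mu>. stable_outcome n beta gamma rigidP rigidQ u v \<mu>"
proof -
  interpret nonneg_rifle_game n beta gamma rigidP rigidQ
    using assms by unfold_locales auto
  show ?thesis
    using stable_exists_if_eps_stable_exists eps_stable_exists by blast
qed

end
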